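(* Let $X,Y\in\{\mathsf{T},\mathsf{S}\}^*$ with $X\sqsubseteq Y$. Then: (idempotence) $X\mathsf{T}\mathsf{T}\equiv X\mathsf{T}$ and $X\mathsf{S}\mathsf{S}\equiv X\mathsf{S}$; (monotonicity) $X\mathsf{T}\sqsubseteq Y\mathsf{T}$; (inflation/deflation) $X\sqsubseteq X\mathsf{T}$ and $X\mathsf{S}\sqsubseteq X$; (maximality) $X\sqsubseteq \mathsf{T}$.
   Context: Fix attribute–taxonomy pairs $A_1{:}T_1,\dots,A_d{:}T_d$ with distinct attribute names, where each taxonomy $T_i=(V_i,\le_{V_i})$ is a poset. A t-tuple over a t-schema $S\subseteq\{A_1{:}T_1,\dots,A_d{:}T_d\}$ maps each $A_i$ in $S$ to a value of $V_i$; $\mathcal{D}$ is the set of all t-tuples over all such t-schemas. A preference relation is a binary relation $\succeq$ on $\mathcal{D}$; its strict part is $t_1\succ t_2$ iff $t_1\succeq t_2$ and not $t_2\succeq t_1$. Preferences are given by a formula $F(x,y)=\bigvee_i P_i(x,y)$, a disjunction of statements; each statement $P_i$ is a disjunction of clauses, each clause a satisfiable conjunction of atoms of the forms $x[A_i]\le_{V_i} v$, $x[A_i]\not\le_{V_i} v$, $y[A_i]\le_{V_i} v$, $y[A_i]\not\le_{V_i} v$; the formula induces $t_1\succeq t_2\iff F(t_1,t_2)$. Operator $\mathsf{T}$ maps a formula to one (obtained by adding statements built from composable clause pairs) inducing the transitive closure over $\mathcal{D}$ of the induced relation. Operator $\mathsf{S}$ (specificity-based refinement): repeat rounds; in a round,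 for each statement $P_i$ let $\mathrm{Impl}(P_i)$ be the set of statements $P_j$ such that $P_j(t_2,t_1)\Rightarrow P_i(t_1,t_2)$ for all $t_1,t_2\in\mathcal{D}$ but not conversely; simultaneously replace every $P_i$ with nonempty $\mathrm{Impl}(P_i)$ by $P_i(x,y)\wedge\bigwedge_{P_j\in \mathrm{Impl}(P_i)}\neg P_j(y,x)$; stop when no $\mathrm{Impl}$ set is nonempty. After each operator, contradictory clauses and subsumed statements are removed. For $X\in\{\mathsf{T},\mathsf{S}\}^*$, $\succeq_X$ is the relation induced by applying the operators of $X$ in order to the initial formula ($\varepsilon$ is the empty sequence). Containment $X\sqsubseteq Y$ means $\succeq_X\subseteq\succeq_Y$ for every initial preference formula; $X\equiv Y$ means $X\sqsubseteq Y$ and $Y\sqsubseteq X$. *)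

theory Defs
  imports Main "HOL-Library.While_Combinator"
begin

text \<open>Attributes are the elements of a finite type 'a (the pairs A_i:T_i);
  V a is the value set of the taxonomy of attribute a, le a its order.\<close>

definition taxonomies_posets :: "('a \<Rightarrow> 'v set) \<Rightarrow> ('a \<Rightarrow> 'v \<Rightarrow> 'v \<Rightarrow> bool) \<Rightarrow> bool" where
  "taxonomies_posets V le \<longleftrightarrow>
     (\<forall>a. (\<forall>u\<in>V a. le a u u)
        \<and> (\<forall>u\<in>V a. \<forall>w\<in>V a. le a u w \<longrightarrow> le a w u \<longrightarrow> u = w)
        \<and> (\<forall>u\<in>V a. \<forall>w\<in>V a. \<forall>z\<in>V a. le a u w \<longrightarrow> le a w z \<longrightarrow> le a u z))"

text \<open>A t-tuple over a t-schema S is a partial map defined exactly on S.\<close>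
type_synonym ('a,'v) ttuple = "'a \<Rightarrow> 'v option"

definition tuples :: "('a \<Rightarrow> 'v set) \<Rightarrow> ('a,'v) ttuple set" where
  "tuples V = {t. \<forall>a w. t a = Some w \<longrightarrow> w \<in> V a}"

datatype var = VX | VY

datatype ('a,'v) atom = Le var 'a 'v | NLe var 'a 'v

type_synonym ('a,'v) clause = "('a,'v) atom list"
type_synonym ('a,'v) stmt = "('a,'v) clause list"
type_synonym ('a,'v) formula = "('a,'v) stmt list"

fun pick :: "var \<Rightarrow> ('a,'v) ttuple \<Rightarrow> ('a,'v) ttuple \<Rightarrow> ('a,'v) ttuple" where
  "pick VX t1 t2 = t1" | "pick VY t1 t2 = t2"

definition att_le :: "('a \<Rightarrow> 'v \<Rightarrow> 'v \<Rightarrow> bool) \<Rightarrow> ('a,'v) ttuple \<Rightarrow> 'a \<Rightarrow> 'v \<Rightarrow> bool" where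
  "att_le le t a v = (case t a of Some w \<Rightarrow> le a w v | None \<Rightarrow> False)"

fun holds_atom :: "('a \<Rightarrow> 'v \<Rightarrow> 'v \<Rightarrow> bool) \<Rightarrow> ('a,'v) atom \<Rightarrow> ('a,'v) ttuple \<Rightarrow> ('a,'v) ttuple \<Rightarrow> bool" where
  "holds_atom le (Le z a v) t1 t2 = att_le le (pick z t1 t2) a v"
| "holds_atom le (NLe z a v) t1 t2 = (\<not> att_le le (pick z t1 t2) a v)"

definition holds_clause where
  "holds_clause le c t1 t2 \<longleftrightarrow> (\<forall>at\<in>set c. holds_atom le at t1 t2)"

definition holds_stmt where
  "holds_stmt le P t1 t2 \<longleftrightarrow> (\<exists>c\<in>set P. holds_clause le c t1 t2)"

definition holds_form where
  "holds_form le F t1 t2 \<longleftrightarrow> (\<exists>P\<in>set F. holds_stmt le P t1 t2)"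

definition induced :: "('a \<Rightarrow> 'v set) \<Rightarrow> ('a \<Rightarrow> 'v \<Rightarrow> 'v \<Rightarrow> bool) \<Rightarrow> ('a,'v) formula
    \<Rightarrow> (('a,'v) ttuple \<times> ('a,'v) ttuple) set" where
  "induced V le F = {(t1,t2). t1 \<in> tuples V \<and> t2 \<in> tuples V \<and> holds_form le F t1 t2}"

fun atom_val :: "('a,'v) atom \<Rightarrow> 'a \<times> 'v" where
  "atom_val (Le z a v) = (a,v)" | "atom_val (NLe z a v) = (a,v)"

definition clause_sat where
  "clause_sat V le c \<longleftrightarrow> (\<exists>t1\<in>tuples V. \<exists>t2\<in>tuples V. holds_clause le c t1 t2)"

text \<open>Initial preference formulas: disjunctions of statements, each a disjunction of
  satisfiable clauses whose constants are taxonomy values.\<close>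
definition wf_formula where
  "wf_formula V le F \<longleftrightarrow>
     (\<forall>P\<in>set F. \<forall>c\<in>set P. clause_sat V le c
        \<and> (\<forall>at\<in>set c. snd (atom_val at) \<in> V (fst (atom_val at))))"

definition stmt_le where
  "stmt_le V le P Q \<longleftrightarrow> (\<forall>t1\<in>tuples V. \<forall>t2\<in>tuples V. holds_stmt le P t1 t2 \<longrightarrow> holds_stmt le Q t1 t2)"

text \<open>Statement i is kept unless it is subsumed by another statement j; among
  equivalent statements the first occurrence is kept.\<close>
definition keep_stmt where
  "keep_stmt V le F i \<longleftrightarrow>
     \<not> (\<exists>j<length F. j \<noteq> i \<and> stmt_le V le (F!i) (F!j) \<and> (\<not> stmt_le V le (F!j) (F!i) \<or> j < i))"

definition clean :: "('a \<Rightarrow> 'v set) \<Rightarrow> ('a \<Rightarrow> 'v \<Rightarrow> 'v \<Rightarrow> bool) \<Rightarrow> ('a,'v) formula \<Rightarrow> ('a,'v) formula" where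
  "clean V le F =
     (let F1 = map (filter (clause_sat V le)) F
      in map (\<lambda>i. F1!i) (filter (keep_stmt V le F1) [0..<length F1]))"

fun swap_var :: "var \<Rightarrow> var" where "swap_var VX = VY" | "swap_var VY = VX"

text \<open>neg_swap_atom at represents the negation of at with x and y exchanged.\<close>
fun neg_swap_atom :: "('a,'v) atom \<Rightarrow> ('a,'v) atom" where
  "neg_swap_atom (Le z a v) = NLe (swap_var z) a v"
| "neg_swap_atom (NLe z a v) = Le (swap_var z) a v"

definition and_stmt :: "('a,'v) stmt \<Rightarrow> ('a,'v) stmt \<Rightarrow> ('a,'v) stmt" where
  "and_stmt P Q = [c @ d. c \<leftarrow> P, d \<leftarrow> Q]"

text \<open>DNF of  not P(y,x).\<close>
definition neg_swap_stmt :: "('a,'v) stmt \<Rightarrow> ('a,'v) stmt" where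
  "neg_swap_stmt P = foldr (\<lambda>c acc. and_stmt (map (\<lambda>at. [neg_swap_atom at]) c) acc) P [[]]"

definition in_impl where
  "in_impl V le Pj Pi \<longleftrightarrow>
     (\<forall>t1\<in>tuples V. \<forall>t2\<in>tuples V. holds_stmt le Pj t2 t1 \<longrightarrow> holds_stmt le Pi t1 t2)
     \<and> \<not> (\<forall>t1\<in>tuples V. \<forall>t2\<in>tuples V. holds_stmt le Pi t1 t2 \<longrightarrow> holds_stmt le Pj t2 t1)"

definition impl_list where
  "impl_list V le F Pi = filter (\<lambda>Pj. in_impl V le Pj Pi) F"

definition S_round :: "('a \<Rightarrow> 'v set) \<Rightarrow> ('a \<Rightarrow> 'v \<Rightarrow> 'v \<Rightarrow> bool) \<Rightarrow> ('a,'v) formula \<Rightarrow> ('a,'v) formula" where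
  "S_round V le F =
     map (\<lambda>Pi. let I = impl_list V le F Pi in
                 if I = [] then Pi else foldl and_stmt Pi (map neg_swap_stmt I)) F"

definition S_stable where
  "S_stable V le F \<longleftrightarrow> (\<forall>Pi\<in>set F. impl_list V le F Pi = [])"

text \<open>None if the rounds never stop.\<close>
definition S_op :: "('a \<Rightarrow> 'v set) \<Rightarrow> ('a \<Rightarrow> 'v \<Rightarrow> 'v \<Rightarrow> bool) \<Rightarrow> ('a,'v) formula \<Rightarrow> ('a,'v) formula option" where
  "S_op V le F = map_option (clean V le) (while_option (\<lambda>G. \<not> S_stable V le G) (S_round V le) F)"

datatype oper = OpT | OpS

text \<open>Top is the operator T (including its clean-up).\<close>
fun apply_op where
  "apply_op Top V le OpT G = Some (Top G)"
| "apply_op Top V le OpS G = S_op V le G"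

definition apply_ops :: "(('a,'v) formula \<Rightarrow> ('a,'v) formula) \<Rightarrow> ('a \<Rightarrow> 'v set) \<Rightarrow> ('a \<Rightarrow> 'v \<Rightarrow> 'v \<Rightarrow> bool)
    \<Rightarrow> oper list \<Rightarrow> ('a,'v) formula \<Rightarrow> ('a,'v) formula option" where
  "apply_ops Top V le X F = foldl (\<lambda>r op. Option.bind r (apply_op Top V le op)) (Some F) X"

definition pref where
  "pref Top V le X F = map_option (induced V le) (apply_ops Top V le X F)"

definition ops_contained where
  "ops_contained Top V le X Y \<longleftrightarrow>
     (\<forall>F R1 R2. wf_formula V le F \<longrightarrow> pref Top V le X F = Some R1 \<longrightarrow> pref Top V le Y F = Some R2
        \<longrightarrow> R1 \<subseteq> R2)"

definition equiv_ops where
  "equiv_ops Top V le X Y \<longleftrightarrow> ops_contained Top V le X Y \<and> ops_contained Top V le Y X"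

definition is_T_operator where
  "is_T_operator V le Top \<longleftrightarrow> (\<forall>F. induced V le (Top F) = trancl (induced V le F))"

end

theory Submission
  imports Defs
begin

text \<open>Only two facts about the operators matter: T replaces the induced relation by its
  transitive closure, and S only strengthens statements (each round conjoins extra
  conditions, and the clean-up preserves the induced relation), so S never adds pairs.
  Once S has stopped, the cleaned formula is still stable, hence a second S is just
  another clean-up; and a second T adds nothing since the closure is already transitive.
  Every operator sequence therefore yields a subrelation of the transitive closure of the
  initial relation, which is what T alone produces.\<close>

lemma holds_and_stmt:
  "holds_stmt le (and_stmt P Q) t1 t2 \<longleftrightarrow> holds_stmt le P t1 t2 \<and> holds_stmt le Q t1 t2"
  unfolding holds_stmt_def and_stmt_def holds_clause_def by fastforce

lemma holds_foldl_and_stmtD: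
  "holds_stmt le (foldl and_stmt P Qs) t1 t2 \<Longrightarrow> holds_stmt le P t1 t2"
  by (induction Qs arbitrary: P) (use holds_and_stmt in fastforce)+

lemma induced_S_round_subset: "induced V le (S_round V le F) \<subseteq> induced V le F"
proof
  fix p assume "p \<in> induced V le (S_round V le F)"
  then obtain t1 t2 Pi where p: "p = (t1,t2)" "t1 \<in> tuples V" "t2 \<in> tuples V"
    and Pi: "Pi \<in> set F"
    and holds: "holds_stmt le (let I = impl_list V le F Pi in
                 if I = [] then Pi else foldl and_stmt Pi (map neg_swap_stmt I)) t1 t2"
    unfolding induced_def holds_form_def S_round_def by auto
  have "holds_stmt le Pi t1 t2"
    using holds holds_foldl_and_stmtD by (auto simp: Let_def split: if_splits)
  then show "p \<in> induced V le F" using p Pi unfolding induced_def holds_form_def by auto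
qed

lemma holds_stmt_filter_clause_sat:
  "t1 \<in> tuples V \<Longrightarrow> t2 \<in> tuples V \<Longrightarrow>
   holds_stmt le (filter (clause_sat V le) P) t1 t2 = holds_stmt le P t1 t2"
  unfolding holds_stmt_def clause_sat_def by auto

lemma stmt_le_refl: "stmt_le V le P P"
  unfolding stmt_le_def by blast

lemma stmt_le_trans: "stmt_le V le P Q \<Longrightarrow> stmt_le V le Q R \<Longrightarrow> stmt_le V le P R"
  unfolding stmt_le_def by blast

lemma subsumed_by_kept_stmt:
  assumes i: "i < length F"
  obtains j where "j < length F" "keep_stmt V le F j" "stmt_le V le (F!i) (F!j)"
proof -
  (* (k, j) \<in> beats means that statement k causes clean to drop statement j;
     a beats-minimal statement above F!i is kept. *)
  define beats where "beats = {(k,j). k < length F \<and> j < length F \<and> k \<noteq> j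
       \<and> stmt_le V le (F!j) (F!k) \<and> (\<not> stmt_le V le (F!k) (F!j) \<or> k < j)}"
  have "finite beats"
    by (rule finite_subset[of _ "{..<length F} \<times> {..<length F}"]) (auto simp: beats_def)
  moreover have "trans beats"
  proof (rule transI)
    fix k j m assume kj: "(k,j) \<in> beats" and jm: "(j,m) \<in> beats"
    have "stmt_le V le (F!m) (F!k)" using kj jm stmt_le_trans unfolding beats_def by blast
    moreover have "\<not> stmt_le V le (F!k) (F!m) \<or> k < m"
    proof (cases "stmt_le V le (F!k) (F!m)")
      case True
      then have "stmt_le V le (F!k) (F!j)" "stmt_le V le (F!j) (F!m)"
        using kj jm stmt_le_trans unfolding beats_def by blast+
      then show ?thesis using kj jm unfolding beats_def by auto
    qed simp
    ultimately show "(k,m) \<in> beats"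
      using kj jm stmt_le_refl unfolding beats_def by auto
  qed
  then have "acyclic beats"
    unfolding acyclic_def using trancl_id by (auto simp: beats_def)
  ultimately have "wf beats" using finite_acyclic_wf by blast
  define above where "above = {j. j < length F \<and> stmt_le V le (F!i) (F!j)}"
  have "i \<in> above" using i stmt_le_refl unfolding above_def by auto
  then obtain z where z: "z \<in> above" and min: "\<And>k. (k,z) \<in> beats \<Longrightarrow> k \<notin> above"
    using wfE_min[OF \<open>wf beats\<close>] by metis
  have "keep_stmt V le F z"
    unfolding keep_stmt_def
  proof
    assume "\<exists>k<length F. k \<noteq> z \<and> stmt_le V le (F!z) (F!k) \<and> (\<not> stmt_le V le (F!k) (F!z) \<or> k < z)"
    then obtain k where k: "k < length F" "k \<noteq> z" "stmt_le V le (F!z) (F!k)"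
      "\<not> stmt_le V le (F!k) (F!z) \<or> k < z" by blast
    then have "(k,z) \<in> beats" using z unfolding beats_def above_def by auto
    moreover have "k \<in> above" using k z stmt_le_trans unfolding above_def by blast
    ultimately show False using min by blast
  qed
  then show thesis using that z unfolding above_def by auto
qed

lemma induced_clean: "induced V le (clean V le F) = induced V le F"
proof -
  define F1 where "F1 = map (filter (clause_sat V le)) F"
  have clean_F: "clean V le F = map (\<lambda>i. F1!i) (filter (keep_stmt V le F1) [0..<length F1])"
    unfolding clean_def F1_def Let_def by simp
  have "induced V le F1 = induced V le F"
    unfolding induced_def holds_form_def F1_def using holds_stmt_filter_clause_sat by fastforce
  moreover have "induced V le F1 \<subseteq> induced V le (clean V le F)"
  proof
    fix p assume "p \<in> induced V le F1"
    then obtain t1 t2 i where p: "p = (t1,t2)" "t1 \<in> tuples V" "t2 \<in> tuples V"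
      and i: "i < length F1" "holds_stmt le (F1!i) t1 t2"
      unfolding induced_def holds_form_def by (auto simp: in_set_conv_nth)
    obtain j where j: "j < length F1" "keep_stmt V le F1 j" "stmt_le V le (F1!i) (F1!j)"
      using i(1) by (rule subsumed_by_kept_stmt)
    have "holds_stmt le (F1!j) t1 t2" using j p i unfolding stmt_le_def by auto
    moreover have "F1!j \<in> set (clean V le F)" unfolding clean_F using j by auto
    ultimately show "p \<in> induced V le (clean V le F)"
      using p unfolding induced_def holds_form_def by auto
  qed
  moreover have "induced V le (clean V le F) \<subseteq> induced V le F1"
    unfolding clean_F induced_def holds_form_def by auto
  ultimately show ?thesis by blast
qed

lemma induced_S_op_subset:
  assumes "S_op V le F = Some G" shows "induced V le G \<subseteq> induced V le F"
proof -
  obtain K where K: "while_option (\<lambda>G. \<not> S_stable V le G) (S_round V le) F = Some K"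
    and G: "G = clean V le K" using assms unfolding S_op_def by auto
  have "induced V le K \<subseteq> induced V le F"
    by (rule while_option_rule[where P="\<lambda>K. induced V le K \<subseteq> induced V le F", OF _ K])
       (use induced_S_round_subset in blast)+
  then show ?thesis using G induced_clean by metis
qed

lemma in_impl_filter_clause_sat:
  "in_impl V le (filter (clause_sat V le) Pj) (filter (clause_sat V le) Pi) = in_impl V le Pj Pi"
  unfolding in_impl_def using holds_stmt_filter_clause_sat by (smt (verit))

lemma set_clean_subset: "set (clean V le F) \<subseteq> filter (clause_sat V le) ` set F"
  unfolding clean_def Let_def by auto

lemma S_stable_clean:
  assumes "S_stable V le F" shows "S_stable V le (clean V le F)"
  unfolding S_stable_def impl_list_def
proof (intro ballI filter_False)
  fix Pi' Pj' assume "Pi' \<in> set (clean V le F)" "Pj' \<in> set (clean V le F)"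
  then obtain Pi Pj where "Pi \<in> set F" "Pi' = filter (clause_sat V le) Pi"
    and "Pj \<in> set F" "Pj' = filter (clause_sat V le) Pj"
    using set_clean_subset by blast
  moreover have "\<not> in_impl V le Pj Pi" if "Pi \<in> set F" "Pj \<in> set F" for Pi Pj
    using assms that unfolding S_stable_def impl_list_def by (metis filter_empty_conv)
  ultimately show "\<not> in_impl V le Pj' Pi'" using in_impl_filter_clause_sat by metis
qed

lemma S_op_S_op:
  assumes "S_op V le F = Some G" shows "S_op V le G = Some (clean V le G)"
proof -
  obtain K where K: "while_option (\<lambda>G. \<not> S_stable V le G) (S_round V le) F = Some K"
    and G: "G = clean V le K" using assms unfolding S_op_def by auto
  have "S_stable V le K" using while_option_stop[OF K] by simp
  then have "S_stable V le G" using G S_stable_clean by blast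
  then have "while_option (\<lambda>G. \<not> S_stable V le G) (S_round V le) G = Some G"
    by (subst while_option_unfold) simp
  then show ?thesis unfolding S_op_def by simp
qed

lemma apply_ops_snoc:
  "apply_ops Top V le (X @ [op]) F = Option.bind (apply_ops Top V le X F) (apply_op Top V le op)"
  by (simp add: apply_ops_def)

lemma apply_op_OpS: "apply_op Top V le OpS = S_op V le"
  by (rule ext) simp

lemma pref_snoc_OpT:
  assumes "is_T_operator V le Top"
  shows "pref Top V le (X @ [OpT]) F = map_option trancl (pref Top V le X F)"
  using assms
  by (cases "apply_ops Top V le X F") (simp_all add: pref_def apply_ops_snoc is_T_operator_def)

lemma pref_snoc_OpS_OpS: "pref Top V le (X @ [OpS, OpS]) F = pref Top V le (X @ [OpS]) F"
proof -
  have twice: "apply_ops Top V le (X @ [OpS, OpS]) F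
      = Option.bind (apply_ops Top V le (X @ [OpS]) F) (S_op V le)"
    using apply_ops_snoc[of Top V le "X @ [OpS]" OpS F] by (simp add: apply_op_OpS)
  show ?thesis
  proof (cases "apply_ops Top V le (X @ [OpS]) F")
    case (Some G)
    moreover have "S_op V le G = Some (clean V le G)"
      using Some S_op_S_op by (auto simp: apply_ops_snoc split: Option.bind_splits)
    ultimately show ?thesis by (simp add: pref_def twice induced_clean)
  qed (simp add: pref_def twice)
qed

lemma pref_snoc_OpS_subset:
  assumes "pref Top V le (X @ [OpS]) F = Some R" "pref Top V le X F = Some R'"
  shows "R \<subseteq> R'"
proof -
  obtain G H where "apply_ops Top V le X F = Some G" "S_op V le G = Some H"
    "R = induced V le H" "R' = induced V le G"
    using assms by (auto simp: pref_def apply_ops_snoc apply_op_OpS split: Option.bind_splits)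
  then show ?thesis using induced_S_op_subset by blast
qed

lemma pref_subset_trancl:
  assumes "is_T_operator V le Top" "pref Top V le X F = Some R"
  shows "R \<subseteq> trancl (induced V le F)"
  using assms(2)
proof (induction X arbitrary: R rule: rev_induct)
  case Nil then show ?case by (auto simp: pref_def apply_ops_def)
next
  case (snoc op X)
  obtain R' where R': "pref Top V le X F = Some R'"
    using snoc.prems by (cases "apply_ops Top V le X F") (simp_all add: pref_def apply_ops_snoc)
  have "R \<subseteq> trancl R'"
  proof (cases op)
    case OpT then show ?thesis using snoc.prems R' pref_snoc_OpT[OF assms(1)] by simp
  next
    case OpS
    then have "R \<subseteq> R'" using snoc.prems R' pref_snoc_OpS_subset by blast
    then show ?thesis by (auto intro: r_into_trancl')
  qed
  also have "\<dots> \<subseteq> trancl (trancl (induced V le F))"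
    using snoc.IH[OF R'] by (rule trancl_mono_subset)
  finally show ?case by (simp add: trans_trancl)
qed

lemma equiv_ops_if_pref_eq:
  "(\<And>F. pref Top V le X F = pref Top V le Y F) \<Longrightarrow> equiv_ops Top V le X Y"
  unfolding equiv_ops_def ops_contained_def by auto

theorem mainTheorem2:
  fixes V :: "'a::finite \<Rightarrow> 'v set"
    and le :: "'a \<Rightarrow> 'v \<Rightarrow> 'v \<Rightarrow> bool"
    and Top :: "('a,'v) formula \<Rightarrow> ('a,'v) formula"
    and X Y :: "oper list"
  assumes "taxonomies_posets V le"
    and "is_T_operator V le Top"
    and "ops_contained Top V le X Y"
  shows "equiv_ops Top V le (X @ [OpT, OpT]) (X @ [OpT])
       \<and> equiv_ops Top V le (X @ [OpS, OpS]) (X @ [OpS])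
       \<and> ops_contained Top V le (X @ [OpT]) (Y @ [OpT])
       \<and> ops_contained Top V le X (X @ [OpT])
       \<and> ops_contained Top V le (X @ [OpS]) X
       \<and> ops_contained Top V le X [OpT]"
proof -
  note T = pref_snoc_OpT[OF assms(2)]
  have "pref Top V le (X @ [OpT, OpT]) F = pref Top V le (X @ [OpT]) F" for F
    using T[of "X @ [OpT]"] T[of X] by (cases "pref Top V le X F") (simp_all add: trans_trancl)
  moreover have "ops_contained Top V le (X @ [OpT]) (Y @ [OpT])"
    using assms(3) unfolding ops_contained_def T by (auto elim!: trancl_mono)
  moreover have "ops_contained Top V le X (X @ [OpT])"
    unfolding ops_contained_def T by auto
  moreover have "ops_contained Top V le (X @ [OpS]) X"
    unfolding ops_contained_def using pref_snoc_OpS_subset by blast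
  moreover have "ops_contained Top V le X [OpT]"
    unfolding ops_contained_def using pref_subset_trancl[OF assms(2)] T[of "[]"]
    by (simp add: pref_def apply_ops_def)
  ultimately show ?thesis
    using equiv_ops_if_pref_eq pref_snoc_OpS_OpS by metis
qed

end
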